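(* Let $S$ be a semigroup with a zero element, defined by the finite complete semigroup presentation $\langle X\mid R\rangle$. Let $0$ be a symbol not in $X$ and let $z\in X^+$ be the $R$-irreducible word representing the zero of $S$. Then the rewriting system on $X\cup\{0\}$ $$R_0=R\cup\{(z,0)\}\cup\{(0x,0),(x0,0): x\in X\cup\{0\}\}$$ is finite and complete and defines $S$. Moreover, in this rewriting system the word $0$ is the irreducible word representing the zero of $S$.
   Context: A rewriting system $\langle X\mid R\rangle$ is a set $R$ of pairs $(u,v)$ (rules $u\to v$) of words $u,v\in X^+$; it is finite if $X$ and $R$ are finite. One-step reduction: $w_1uw_2\to_R w_1vw_2$ for $(u,v)\in R$, $w_1,w_2\in X^*$; $\to_R^*$ is its reflexive transitive closure. A word is $R$-irreducible if no rule applies to it. $R$ is noetherian if there is no infinite chain $w_1\to_R w_2\to_R\cdots$, confluent if $u\to_R^*v$ and $u\to_R^*v'$ imply a $w$ with $v\to_R^*w$, $v'\to_R^*w$, and complete if both; in a complete system each congruence class contains exactly one irreducible word. The semigroup defined by $\langle X\mid R\rangle$ is $X^+$ modulo the congruence generated by $R$. *)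

theory Defs
  imports Main
begin

definition words :: "'a set \<Rightarrow> 'a list set" where
  "words X = {w. w \<noteq> [] \<and> set w \<subseteq> X}"

definition rewriting_system :: "'a set \<Rightarrow> ('a list \<times> 'a list) set \<Rightarrow> bool" where
  "rewriting_system X R \<longleftrightarrow> (\<forall>(u,v)\<in>R. u \<in> words X \<and> v \<in> words X)"

definition finite_rs :: "'a set \<Rightarrow> ('a list \<times> 'a list) set \<Rightarrow> bool" where
  "finite_rs X R \<longleftrightarrow> finite X \<and> finite R"

definition step :: "('a list \<times> 'a list) set \<Rightarrow> ('a list \<times> 'a list) set" where
  "step R = {(w1 @ u @ w2, w1 @ v @ w2) | w1 u v w2. (u, v) \<in> R}"

definition irreducible :: "('a list \<times> 'a list) set \<Rightarrow> 'a list \<Rightarrow> bool" where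
  "irreducible R w \<longleftrightarrow> (\<nexists>w'. (w, w') \<in> step R)"

definition noetherian :: "'a set \<Rightarrow> ('a list \<times> 'a list) set \<Rightarrow> bool" where
  "noetherian X R \<longleftrightarrow>
     \<not> (\<exists>f :: nat \<Rightarrow> 'a list. f 0 \<in> words X \<and> (\<forall>i. (f i, f (Suc i)) \<in> step R))"

definition confluent :: "'a set \<Rightarrow> ('a list \<times> 'a list) set \<Rightarrow> bool" where
  "confluent X R \<longleftrightarrow>
     (\<forall>u \<in> words X. \<forall>v v'. (u, v) \<in> (step R)\<^sup>* \<and> (u, v') \<in> (step R)\<^sup>* \<longrightarrow>
        (\<exists>w. (v, w) \<in> (step R)\<^sup>* \<and> (v', w) \<in> (step R)\<^sup>*))"

definition complete :: "'a set \<Rightarrow> ('a list \<times> 'a list) set \<Rightarrow> bool" where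
  "complete X R \<longleftrightarrow> noetherian X R \<and> confluent X R"

text \<open>The congruence on X^+ generated by R (its classes are the elements of the
  semigroup defined by the presentation).\<close>
definition cong_rel :: "'a set \<Rightarrow> ('a list \<times> 'a list) set \<Rightarrow> ('a list \<times> 'a list) set" where
  "cong_rel X R = ((step R \<union> (step R)\<inverse>) \<inter> (words X \<times> words X))\<^sup>* \<inter> (words X \<times> words X)"

definition represents_zero :: "'a set \<Rightarrow> ('a list \<times> 'a list) set \<Rightarrow> 'a list \<Rightarrow> bool" where
  "represents_zero X R z \<longleftrightarrow> z \<in> words X \<and>
     (\<forall>w \<in> words X. (w @ z, z) \<in> cong_rel X R \<and> (z @ w, z) \<in> cong_rel X R)"

text \<open>The extended system R_0 on X \<union> {c0}, where c0 plays the role of the new symbol 0.\<close>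
definition R0 :: "'a set \<Rightarrow> ('a list \<times> 'a list) set \<Rightarrow> 'a list \<Rightarrow> 'a \<Rightarrow> ('a list \<times> 'a list) set" where
  "R0 X R z c0 = R \<union> {(z, [c0])} \<union> {([c0, x], [c0]) | x. x \<in> X \<union> {c0}}
                  \<union> {([x, c0], [c0]) | x. x \<in> X \<union> {c0}}"

end

theory Submission
  imports Defs "HOL-Library.Multiset"
begin

text \<open>
  Termination: cutting a word at the occurrences of \<open>0\<close> leaves a multiset of \<open>0\<close>-free blocks, and
  every rule of \<open>R\<^sub>0\<close> replaces one block by \<open>R\<close>-reducts or proper factors of it, so the multiset
  extension of "\<open>R\<close>-reduct or proper factor" (well-founded as \<open>R\<close> is noetherian) decreases.
  Confluence: the map sending a word to \<open>0\<close> if it contains \<open>0\<close> or is \<open>R\<close>-congruent to \<open>z\<close>, and to its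
  \<open>R\<close>-normal form otherwise, is invariant under \<open>R\<^sub>0\<close>-steps and fixes every \<open>R\<^sub>0\<close>-irreducible word,
  so any two normal forms of a word coincide. Substituting \<open>z\<close> for \<open>0\<close> maps \<open>R\<^sub>0\<close>-steps to
  \<open>R\<close>-congruences, so \<open>R\<^sub>0\<close> induces no new relations between words over \<open>X\<close>.
\<close>

lemma step_iff:
  "(a, b) \<in> step R \<longleftrightarrow> (\<exists>w1 u v w2. a = w1 @ u @ w2 \<and> b = w1 @ v @ w2 \<and> (u, v) \<in> R)"
  unfolding step_def by blast

lemma stepI: "(u, v) \<in> R \<Longrightarrow> (w1 @ u @ w2, w1 @ v @ w2) \<in> step R"
  unfolding step_def by blast

lemma step_append_context: "(a, b) \<in> step R \<Longrightarrow> (p @ a @ q, p @ b @ q) \<in> step R"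
  unfolding step_iff by (metis append.assoc)

lemma steps_append_context: "(a, b) \<in> (step R)\<^sup>* \<Longrightarrow> (p @ a @ q, p @ b @ q) \<in> (step R)\<^sup>*"
  by (induction rule: rtrancl_induct) (auto intro: rtrancl_into_rtrancl step_append_context)

lemma step_mono: "R \<subseteq> R' \<Longrightarrow> step R \<subseteq> step R'"
  unfolding step_def by blast

lemma irreducible_steps_eq: "irreducible R a \<Longrightarrow> (a, b) \<in> (step R)\<^sup>* \<Longrightarrow> b = a"
  unfolding irreducible_def by (metis converse_rtranclE)

lemma words_mono: "X \<subseteq> Y \<Longrightarrow> words X \<subseteq> words Y"
  unfolding words_def by blast

lemma words_append_context: "set p \<subseteq> Y \<Longrightarrow> set q \<subseteq> Y \<Longrightarrow> a \<in> words Y \<Longrightarrow> p @ a @ q \<in> words Y"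
  unfolding words_def by auto

lemma step_set_subset:
  "rewriting_system Y R \<Longrightarrow> (a, b) \<in> step R \<Longrightarrow> set a \<subseteq> Y \<Longrightarrow> set b \<subseteq> Y"
  unfolding step_iff rewriting_system_def words_def by fastforce

lemma step_words:
  "rewriting_system Y R \<Longrightarrow> (a, b) \<in> step R \<Longrightarrow> a \<in> words Y \<Longrightarrow> b \<in> words Y"
  unfolding step_iff rewriting_system_def words_def by fastforce

lemma steps_words:
  assumes "rewriting_system Y R" "(a, b) \<in> (step R)\<^sup>*" "a \<in> words Y"
  shows "b \<in> words Y"
  using assms(2,3) by (induction rule: rtrancl_induct) (auto intro: step_words[OF assms(1)])

lemma cong_rel_refl: "a \<in> words Y \<Longrightarrow> (a, a) \<in> cong_rel Y Q"
  unfolding cong_rel_def by blast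

lemma cong_rel_sym: "(a, b) \<in> cong_rel Y Q \<Longrightarrow> (b, a) \<in> cong_rel Y Q"
proof -
  let ?E = "(step Q \<union> (step Q)\<inverse>) \<inter> (words Y \<times> words Y)"
  assume "(a, b) \<in> cong_rel Y Q"
  then have "(b, a) \<in> (?E\<inverse>)\<^sup>*" "a \<in> words Y" "b \<in> words Y"
    unfolding cong_rel_def by (auto simp: rtrancl_converse)
  moreover have "?E\<inverse> = ?E" by auto
  ultimately show ?thesis unfolding cong_rel_def by auto
qed

lemma cong_rel_trans: "(a, b) \<in> cong_rel Y Q \<Longrightarrow> (b, c) \<in> cong_rel Y Q \<Longrightarrow> (a, c) \<in> cong_rel Y Q"
  unfolding cong_rel_def using rtrancl_trans by fastforce

lemma step_cong_rel:
  "(a, b) \<in> step Q \<Longrightarrow> a \<in> words Y \<Longrightarrow> b \<in> words Y \<Longrightarrow> (a, b) \<in> cong_rel Y Q"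
  unfolding cong_rel_def by blast

lemma steps_cong_rel:
  assumes "rewriting_system Y Q" "(a, b) \<in> (step Q)\<^sup>*" "a \<in> words Y"
  shows "(a, b) \<in> cong_rel Y Q"
  using assms(2,3)
proof (induction rule: rtrancl_induct)
  case base
  then show ?case by (rule cong_rel_refl)
next
  case (step b c)
  have "b \<in> words Y" using steps_words[OF assms(1) step.hyps(1) step.prems] .
  with step.hyps(2) have "(b, c) \<in> cong_rel Y Q"
    by (meson assms(1) step_cong_rel step_words)
  with step.IH step.prems show ?case by (blast intro: cong_rel_trans)
qed

lemma cong_rel_append_context:
  assumes "(a, b) \<in> cong_rel Y Q" "set p \<subseteq> Y" "set q \<subseteq> Y"
  shows "(p @ a @ q, p @ b @ q) \<in> cong_rel Y Q"
proof -
  let ?E = "(step Q \<union> (step Q)\<inverse>) \<inter> (words Y \<times> words Y)"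
  have "(a, b) \<in> ?E\<^sup>*" "a \<in> words Y" "b \<in> words Y"
    using assms(1) unfolding cong_rel_def by auto
  have "(p @ a @ q, p @ b @ q) \<in> ?E\<^sup>*" using \<open>(a, b) \<in> ?E\<^sup>*\<close>
  proof (induction rule: rtrancl_induct)
    case (step c d)
    then have "(p @ c @ q, p @ d @ q) \<in> ?E"
      using step_append_context words_append_context[OF assms(2,3)] by blast
    with step.IH show ?case by (rule rtrancl_into_rtrancl)
  qed simp
  then show ?thesis
    unfolding cong_rel_def using words_append_context[OF assms(2,3)] \<open>a \<in> words Y\<close> \<open>b \<in> words Y\<close>
    by blast
qed

lemma cong_rel_mono:
  assumes "X \<subseteq> Y" "R \<subseteq> Q"
  shows "cong_rel X R \<subseteq> cong_rel Y Q"
proof -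
  have "(step R \<union> (step R)\<inverse>) \<inter> (words X \<times> words X)
      \<subseteq> (step Q \<union> (step Q)\<inverse>) \<inter> (words Y \<times> words Y)"
    using step_mono[OF assms(2)] words_mono[OF assms(1)] by blast
  then show ?thesis
    using rtrancl_mono words_mono[OF assms(1)] unfolding cong_rel_def by blast
qed

lemma noetherian_wf:
  assumes "noetherian Y R"
  shows "wf {(t, s). s \<in> words Y \<and> (s, t) \<in> step R}"
proof (rule ccontr)
  assume "\<not> ?thesis"
  then obtain f where "\<And>i. f i \<in> words Y \<and> (f i, f (Suc i)) \<in> step R"
    unfolding wf_iff_no_infinite_down_chain by blast
  then show False using assms unfolding noetherian_def by blast
qed

lemma normal_form_exists:
  assumes "rewriting_system Y R" "noetherian Y R" "s \<in> words Y"
  shows "\<exists>n. (s, n) \<in> (step R)\<^sup>* \<and> irreducible R n"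
  using assms(3)
proof (induction s rule: wf_induct[OF noetherian_wf[OF assms(2)]])
  case (1 s)
  show ?case
  proof (cases "irreducible R s")
    case False
    then obtain s' where s': "(s, s') \<in> step R" unfolding irreducible_def by blast
    with 1 obtain n where "(s', n) \<in> (step R)\<^sup>*" "irreducible R n"
      using step_words[OF assms(1)] by blast
    with s' show ?thesis by (meson converse_rtrancl_into_rtrancl)
  qed blast
qed

text \<open>Two normal forms of one word have the same image under \<open>f\<close>, hence coincide.\<close>

lemma confluent_by_invariant:
  assumes rs: "rewriting_system Y Q" and noeth: "noetherian Y Q"
    and invariant: "\<And>w w'. w \<in> words Y \<Longrightarrow> (w, w') \<in> step Q \<Longrightarrow> f w' = f w"
    and fixes_irreducible: "\<And>n. n \<in> words Y \<Longrightarrow> irreducible Q n \<Longrightarrow> f n = n"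
  shows "confluent Y Q"
  unfolding confluent_def
proof (intro ballI allI impI)
  have steps_invariant: "f w' = f w" if "(w, w') \<in> (step Q)\<^sup>*" "w \<in> words Y" for w w'
    using that
  proof (induction rule: rtrancl_induct)
    case (step b c)
    then show ?case using invariant steps_words[OF rs] by metis
  qed simp
  fix u v v'
  assume u: "u \<in> words Y" and uv: "(u, v) \<in> (step Q)\<^sup>* \<and> (u, v') \<in> (step Q)\<^sup>*"
  then have "v \<in> words Y" "v' \<in> words Y" using steps_words[OF rs] by auto
  then obtain n n' where n: "(v, n) \<in> (step Q)\<^sup>*" "irreducible Q n"
    and n': "(v', n') \<in> (step Q)\<^sup>*" "irreducible Q n'"
    using normal_form_exists[OF rs noeth] by meson
  have "(u, n) \<in> (step Q)\<^sup>*" "(u, n') \<in> (step Q)\<^sup>*" using uv n n' by auto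
  then have "n = n'"
    using steps_invariant fixes_irreducible steps_words[OF rs] u n(2) n'(2) by metis
  with n n' show "\<exists>w. (v, w) \<in> (step Q)\<^sup>* \<and> (v', w) \<in> (step Q)\<^sup>*" by blast
qed

definition normal_form :: "('a list \<times> 'a list) set \<Rightarrow> 'a list \<Rightarrow> 'a list" where
  "normal_form R w = (SOME n. (w, n) \<in> (step R)\<^sup>* \<and> irreducible R n)"

context
  fixes X :: "'a set" and R :: "('a list \<times> 'a list) set"
  assumes rs: "rewriting_system X R" and comp: "complete X R"
begin

lemma normal_form:
  "w \<in> words X \<Longrightarrow> (w, normal_form R w) \<in> (step R)\<^sup>* \<and> irreducible R (normal_form R w)"
  unfolding normal_form_def
  using normal_form_exists[OF rs] comp unfolding complete_def by (metis (mono_tags) someI_ex)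

lemma normal_form_unique:
  assumes "w \<in> words X" "(w, n) \<in> (step R)\<^sup>*" "irreducible R n"
  shows "n = normal_form R w"
proof -
  obtain m where "(n, m) \<in> (step R)\<^sup>*" "(normal_form R w, m) \<in> (step R)\<^sup>*"
    using comp assms normal_form[OF assms(1)] unfolding complete_def confluent_def by blast
  then show ?thesis using irreducible_steps_eq assms(3) normal_form[OF assms(1)] by metis
qed

lemma step_normal_form_eq:
  assumes "(b, c) \<in> step R" "b \<in> words X"
  shows "normal_form R b = normal_form R c"
proof -
  have c: "c \<in> words X" using step_words[OF rs assms] .
  with assms(1) have "(b, normal_form R c) \<in> (step R)\<^sup>*"
    using normal_form by (meson converse_rtrancl_into_rtrancl)
  then show ?thesis using normal_form_unique[OF assms(2)] normal_form[OF c] by metis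
qed

lemma cong_rel_normal_form_eq:
  assumes "(p, q) \<in> cong_rel X R"
  shows "normal_form R p = normal_form R q"
proof -
  let ?E = "(step R \<union> (step R)\<inverse>) \<inter> (words X \<times> words X)"
  have "(p, q) \<in> ?E\<^sup>*" using assms unfolding cong_rel_def by auto
  then show ?thesis
  proof (induction rule: rtrancl_induct)
    case (step b c)
    then have "normal_form R b = normal_form R c"
      using step_normal_form_eq by (metis IntE SigmaE2 Un_iff converse_iff)
    with step.IH show ?case by simp
  qed simp
qed

end

definition reduct_or_factor :: "'a set \<Rightarrow> ('a list \<times> 'a list) set \<Rightarrow> ('a list \<times> 'a list) set" where
  "reduct_or_factor X R =
     {(t, s). set s \<subseteq> X \<and> ((s, t) \<in> step R \<or> (\<exists>p q. s = p @ t @ q \<and> p @ q \<noteq> []))}"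

text \<open>Factors commute with reduction: if \<open>t\<close> is a factor of \<open>s\<close> and \<open>t \<rightarrow> t'\<close>, then \<open>t'\<close> is a
  factor of a reduct of \<open>s\<close>; hence "factor, then reduce" is well-founded relative to reduction.\<close>

lemma wf_reduct_or_factor:
  assumes rs: "rewriting_system X R" and noeth: "noetherian X R"
  shows "wf (reduct_or_factor X R)"
proof -
  define Rd where "Rd = {(t, s). set s \<subseteq> X \<and> (s, t) \<in> step R}"
  define Fc where "Fc = {(t, s). set s \<subseteq> X \<and> (\<exists>p q. s = p @ t @ q \<and> p @ q \<noteq> [])}"
  have "Rd \<subseteq> {(t, s). s \<in> words X \<and> (s, t) \<in> step R}"
    unfolding Rd_def words_def step_iff using rs unfolding rewriting_system_def words_def by fastforce
  then have wf_Rd: "wf Rd" using wf_subset[OF noetherian_wf[OF noeth]] by blast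
  have "Fc \<subseteq> measure length" unfolding Fc_def by auto
  then have wf_Fc: "wf Fc" using wf_subset by blast
  have "Rd O Fc \<subseteq> (Rd \<union> Fc)\<^sup>* O Rd"
  proof
    fix a assume "a \<in> Rd O Fc"
    then obtain t t' p q where a: "a = (t', p @ t @ q)" and tt': "(t, t') \<in> step R"
      and s: "set (p @ t @ q) \<subseteq> X" "p @ q \<noteq> []"
      unfolding Rd_def Fc_def by blast
    have "(p @ t' @ q, p @ t @ q) \<in> Rd" unfolding Rd_def using s step_append_context[OF tt'] by blast
    moreover have "(t', p @ t' @ q) \<in> Fc"
      unfolding Fc_def using s step_set_subset[OF rs step_append_context[OF tt', of p q]] by auto
    ultimately show "a \<in> (Rd \<union> Fc)\<^sup>* O Rd" using a by blast
  qed
  then have "wf (Fc\<^sup>* O Rd O Fc\<^sup>*)" using qc_wf_relto_iff wf_Rd by blast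
  moreover have "(Fc\<^sup>* O Rd O Fc\<^sup>*) O Fc \<subseteq> Fc\<^sup>* O Rd O Fc\<^sup>*"
    by (auto intro: rtrancl_into_rtrancl)
  ultimately have "wf ((Fc\<^sup>* O Rd O Fc\<^sup>*) \<union> Fc)" using wf_union_compatible wf_Fc by blast
  moreover have "reduct_or_factor X R \<subseteq> (Fc\<^sup>* O Rd O Fc\<^sup>*) \<union> Fc"
    unfolding reduct_or_factor_def Rd_def Fc_def by blast
  ultimately show ?thesis using wf_subset by blast
qed

lemma reduct_or_factor_factorI:
  "set (p @ t @ q) \<subseteq> X \<Longrightarrow> p @ q \<noteq> [] \<Longrightarrow> (t, p @ t @ q) \<in> reduct_or_factor X R"
  unfolding reduct_or_factor_def by blast

lemma mult1_replace_by_smaller: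
  assumes "\<And>k. k \<in> set K \<Longrightarrow> (k, s) \<in> r"
  shows "(mset (P @ K @ Q), mset (P @ [s] @ Q)) \<in> mult1 r"
proof -
  have "mset (P @ [s] @ Q) = add_mset s (mset (P @ Q))" "mset (P @ K @ Q) = mset (P @ Q) + mset K"
    by simp_all
  moreover have "\<forall>b. b \<in># mset K \<longrightarrow> (b, s) \<in> r" using assms by simp
  ultimately show ?thesis
    unfolding mult1_def
    by (simp del: mset_append) (rule exI[of _ s], rule exI[of _ "mset (P @ Q)"], simp)
qed

text \<open>\<open>blocks c w\<close> lists the maximal \<open>c\<close>-free factors of \<open>w\<close>, including empty ones, so that
  \<open>w\<close> is their concatenation with \<open>c\<close> in between.\<close>

fun blocks :: "'a \<Rightarrow> 'a list \<Rightarrow> 'a list list" where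
  "blocks c [] = [[]]"
| "blocks c (x # w) =
     (if x = c then [] # blocks c w else (x # hd (blocks c w)) # tl (blocks c w))"

lemma blocks_not_Nil [simp]: "blocks c w \<noteq> []"
  by (induction w) auto

lemma blocks_append:
  "blocks c (u @ v) = butlast (blocks c u) @ [last (blocks c u) @ hd (blocks c v)] @ tl (blocks c v)"
proof (induction u)
  case Nil
  then show ?case by (cases "blocks c v") auto
next
  case (Cons x u)
  obtain ys y where yy: "blocks c u = ys @ [y]" by (metis blocks_not_Nil rev_exhaust)
  with Cons show ?case by (cases ys) (auto simp: butlast_append)
qed

lemma blocks_free: "c \<notin> set u \<Longrightarrow> blocks c u = [u]"
  by (induction u) auto

lemma blocks_split: "blocks c (w1 @ c # w2) = blocks c w1 @ blocks c w2"
  using blocks_append[of c w1 "c # w2"] by simp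

lemma blocks_infix:
  "c \<notin> set u \<Longrightarrow> blocks c (w1 @ u @ w2) =
     butlast (blocks c w1) @ [last (blocks c w1) @ u @ hd (blocks c w2)] @ tl (blocks c w2)"
  using blocks_append[of c w1 "u @ w2"] blocks_append[of c u w2] blocks_free[of c u] by simp

lemma set_blocks: "s \<in> set (blocks c w) \<Longrightarrow> set s \<subseteq> set w - {c}"
proof (induction w arbitrary: s)
  case (Cons x w)
  have "hd (blocks c w) \<in> set (blocks c w)" "\<And>t. t \<in> set (tl (blocks c w)) \<Longrightarrow> t \<in> set (blocks c w)"
    by (simp_all add: list.set_sel(2))
  with Cons show ?case by (cases "x = c") (fastforce dest: Cons.IH)+
qed simp

locale zero_adjunction =
  fixes X :: "'a set" and R :: "('a list \<times> 'a list) set" and z :: "'a list" and c0 :: 'a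
  assumes rs: "rewriting_system X R" and fin: "finite_rs X R" and comp: "complete X R"
    and c0: "c0 \<notin> X" and zero: "represents_zero X R z" and irr: "irreducible R z"
begin

abbreviation "Y \<equiv> X \<union> {c0}"
abbreviation "Q \<equiv> R0 X R z c0"

lemma z_words: "z \<in> words X"
  using zero unfolding represents_zero_def by blast

lemma c0_notin_z: "c0 \<notin> set z"
  using z_words c0 unfolding words_def by blast

lemma R_words: "(u, v) \<in> R \<Longrightarrow> u \<in> words X \<and> v \<in> words X"
  using rs unfolding rewriting_system_def by blast

lemma R_subset_Q: "R \<subseteq> Q"
  unfolding R0_def by blast

lemma Q_cases:
  "(u, v) \<in> Q \<Longrightarrow> (u, v) \<in> R \<or> (u = z \<and> v = [c0])
     \<or> (\<exists>x\<in>Y. u = [c0, x] \<and> v = [c0]) \<or> (\<exists>x\<in>Y. u = [x, c0] \<and> v = [c0])"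
  unfolding R0_def by blast

lemma rewriting_system_Q: "rewriting_system Y Q"
  unfolding rewriting_system_def
  using Q_cases R_words z_words unfolding words_def by fastforce

lemma finite_rs_Q: "finite_rs Y Q"
proof -
  have "{([c0, x], [c0]) | x. x \<in> Y} = (\<lambda>x. ([c0, x], [c0])) ` Y"
    "{([x, c0], [c0]) | x. x \<in> Y} = (\<lambda>x. ([x, c0], [c0])) ` Y" by blast+
  with fin show ?thesis unfolding finite_rs_def R0_def by simp
qed

lemma z_step: "(z, [c0]) \<in> step Q"
  using stepI[of z "[c0]" Q "[]" "[]"] unfolding R0_def by simp

lemma zero_absorbs: "set p \<subseteq> X \<Longrightarrow> set q \<subseteq> X \<Longrightarrow> (p @ z @ q, z) \<in> cong_rel X R"
proof -
  have absorb: "(w, z) \<in> cong_rel X R" if "w = p @ z \<or> w = z @ p" "set p \<subseteq> X" for w p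
    using zero that cong_rel_refl[OF z_words] unfolding represents_zero_def words_def
    by (cases "p = []") auto
  assume "set p \<subseteq> X" "set q \<subseteq> X"
  then have "(p @ z @ q, z @ q) \<in> cong_rel X R" "(z @ q, z) \<in> cong_rel X R"
    using cong_rel_append_context[OF absorb, of "p @ z" p "[]" q] absorb by auto
  then show ?thesis by (rule cong_rel_trans)
qed

subsubsection \<open>Termination\<close>

lemma step_Q_blocks_decrease:
  assumes w: "set w \<subseteq> Y" and st: "(w, w') \<in> step Q"
  shows "(mset (blocks c0 w'), mset (blocks c0 w)) \<in> mult1 (reduct_or_factor X R)"
proof -
  obtain w1 u v w2 where ww: "w = w1 @ u @ w2" "w' = w1 @ v @ w2" and uv: "(u, v) \<in> Q"
    using st unfolding step_iff by blast
  define A a b B where "A = butlast (blocks c0 w1)" and "a = last (blocks c0 w1)"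
    and "b = hd (blocks c0 w2)" and "B = tl (blocks c0 w2)"
  have w1_blocks: "blocks c0 w1 = A @ [a]" and w2_blocks: "blocks c0 w2 = b # B"
    unfolding A_def a_def b_def B_def by simp_all
  have block_X: "set s \<subseteq> X" if "s \<in> set (blocks c0 w)" for s
    using set_blocks[OF that] w by auto
  consider "(u, v) \<in> R" | "u = z" "v = [c0]" | "u = [c0, c0]" "v = [c0]"
    | x where "x \<in> X" "u = [c0, x]" "v = [c0]" | x where "x \<in> X" "u = [x, c0]" "v = [c0]"
    using Q_cases[OF uv] by blast
  then show ?thesis
  proof cases
    case 1
    then have "c0 \<notin> set u" "c0 \<notin> set v" using R_words c0 unfolding words_def by auto
    then have w: "blocks c0 w = A @ [a @ u @ b] @ B" and w': "blocks c0 w' = A @ [a @ v @ b] @ B"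
      using blocks_infix[of c0 u w1 w2] blocks_infix[of c0 v w1 w2] ww
      unfolding A_def a_def b_def B_def by simp_all
    have "set (a @ u @ b) \<subseteq> X" by (rule block_X) (simp add: w)
    then have "(a @ v @ b, a @ u @ b) \<in> reduct_or_factor X R"
      using stepI[OF 1] unfolding reduct_or_factor_def by blast
    then show ?thesis unfolding w w' by (intro mult1_replace_by_smaller) simp
  next
    case 2
    then have w: "blocks c0 w = A @ [a @ z @ b] @ B"
      using blocks_infix[OF c0_notin_z] ww unfolding A_def a_def b_def B_def by simp
    have w': "blocks c0 w' = A @ [a, b] @ B"
      using blocks_split[of c0 w1 w2] ww 2 w1_blocks w2_blocks by simp
    have "set (a @ z @ b) \<subseteq> X" by (rule block_X) (simp add: w)
    moreover have "z \<noteq> []" using z_words unfolding words_def by blast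
    ultimately have "(a, a @ z @ b) \<in> reduct_or_factor X R" "(b, a @ z @ b) \<in> reduct_or_factor X R"
      using reduct_or_factor_factorI[of "[]" a "z @ b"] reduct_or_factor_factorI[of "a @ z" b "[]"]
      by simp_all
    then show ?thesis unfolding w w' by (intro mult1_replace_by_smaller) auto
  next
    case 3
    then have w: "blocks c0 w = blocks c0 w1 @ [[]] @ blocks c0 w2"
      and w': "blocks c0 w' = blocks c0 w1 @ [] @ blocks c0 w2"
      using blocks_split[of c0 w1 "c0 # w2"] blocks_split[of c0 w1 w2] ww by simp_all
    show ?thesis unfolding w w' by (intro mult1_replace_by_smaller) simp
  next
    case (4 x)
    then have "x \<noteq> c0" using c0 by blast
    with 4 have w: "blocks c0 w = blocks c0 w1 @ [x # b] @ B"
      and w': "blocks c0 w' = blocks c0 w1 @ [b] @ B"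
      using blocks_split[of c0 w1] ww w2_blocks by simp_all
    have "set (x # b) \<subseteq> X" by (rule block_X) (simp add: w)
    then have "(b, x # b) \<in> reduct_or_factor X R"
      using reduct_or_factor_factorI[of "[x]" b "[]"] by simp
    then show ?thesis unfolding w w' by (intro mult1_replace_by_smaller) simp
  next
    case (5 x)
    then have "c0 \<notin> set [x]" using c0 by auto
    then have "blocks c0 (w1 @ [x]) = A @ [a @ [x]]"
      using blocks_infix[of c0 "[x]" w1 "[]"] unfolding A_def a_def by simp
    with 5 have w: "blocks c0 w = A @ [a @ [x]] @ blocks c0 w2"
      and w': "blocks c0 w' = A @ [a] @ blocks c0 w2"
      using blocks_split[of c0 "w1 @ [x]" w2] blocks_split[of c0 w1 w2] ww w1_blocks by simp_all
    have "set (a @ [x]) \<subseteq> X" by (rule block_X) (simp add: w)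
    then have "(a, a @ [x]) \<in> reduct_or_factor X R"
      using reduct_or_factor_factorI[of "[]" a "[x]"] by simp
    then show ?thesis unfolding w w' by (intro mult1_replace_by_smaller) simp
  qed
qed

lemma noetherian_Q: "noetherian Y Q"
  unfolding noetherian_def
proof
  assume "\<exists>f. f 0 \<in> words Y \<and> (\<forall>i. (f i, f (Suc i)) \<in> step Q)"
  then obtain f where f0: "f 0 \<in> words Y" and f_step: "\<And>i. (f i, f (Suc i)) \<in> step Q" by blast
  have "set (f i) \<subseteq> Y" for i
    using f0 step_set_subset[OF rewriting_system_Q f_step] unfolding words_def
    by (induction i) auto
  then have "(mset (blocks c0 (f (Suc i))), mset (blocks c0 (f i))) \<in> mult (reduct_or_factor X R)"
    for i
    using step_Q_blocks_decrease[OF _ f_step] unfolding mult_def by blast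
  then have "\<exists>g. \<forall>i. (g (Suc i), g i) \<in> mult (reduct_or_factor X R)"
    by (intro exI[of _ "\<lambda>i. mset (blocks c0 (f i))"]) simp
  moreover have "wf (mult (reduct_or_factor X R))"
    using wf_mult wf_reduct_or_factor[OF rs] comp unfolding complete_def by blast
  ultimately show False unfolding wf_iff_no_infinite_down_chain by blast
qed

subsubsection \<open>Confluence\<close>

definition zero_nf :: "'a list \<Rightarrow> 'a list" where
  "zero_nf w = (if c0 \<in> set w \<or> (w, z) \<in> cong_rel X R then [c0] else normal_form R w)"

lemma step_Q_keeps_c0: "(w, w') \<in> step Q \<Longrightarrow> c0 \<in> set w \<Longrightarrow> c0 \<in> set w'"
  unfolding step_iff using Q_cases R_words c0_notin_z c0 unfolding words_def by fastforce

lemma zero_nf_step: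
  assumes w: "w \<in> words Y" and st: "(w, w') \<in> step Q"
  shows "zero_nf w' = zero_nf w"
proof (cases "c0 \<in> set w")
  case True
  then show ?thesis using step_Q_keeps_c0[OF st] unfolding zero_nf_def by simp
next
  case False
  then have wX: "w \<in> words X" using w unfolding words_def by blast
  obtain w1 u v w2 where ww: "w = w1 @ u @ w2" "w' = w1 @ v @ w2" and uv: "(u, v) \<in> Q"
    using st unfolding step_iff by blast
  have sets: "set w1 \<subseteq> X" "set u \<subseteq> X" "set w2 \<subseteq> X" using wX ww unfolding words_def by auto
  then consider "(u, v) \<in> R" | "u = z" "v = [c0]"
    using Q_cases[OF uv] c0 by auto
  then show ?thesis
  proof cases
    case 1
    then have "(w, w') \<in> step R" using ww stepI by blast
    then have "w' \<in> words X" "(w, w') \<in> cong_rel X R"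
      using step_words[OF rs] steps_cong_rel[OF rs] wX by blast+
    moreover from this have "c0 \<notin> set w'" using c0 unfolding words_def by blast
    ultimately show ?thesis unfolding zero_nf_def using False
      cong_rel_normal_form_eq[OF rs comp] cong_rel_sym cong_rel_trans by metis
  next
    case 2
    then have "(w, z) \<in> cong_rel X R" "c0 \<in> set w'" using zero_absorbs[OF sets(1,3)] ww by auto
    then show ?thesis unfolding zero_nf_def by simp
  qed
qed

text \<open>An irreducible word containing \<open>0\<close> has no letter next to it, so it is \<open>[c0]\<close>; an
  irreducible word over \<open>X\<close> is its own \<open>R\<close>-normal form, and differs from \<open>z\<close> since \<open>z \<rightarrow> 0\<close>.\<close>

lemma zero_nf_irreducible:
  assumes n: "n \<in> words Y" and irr_n: "irreducible Q n"
  shows "zero_nf n = n"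
proof (cases "c0 \<in> set n")
  case True
  then obtain p q where pq: "n = p @ c0 # q" by (meson split_list)
  have "q = []"
  proof (rule ccontr)
    assume "q \<noteq> []"
    then obtain x q' where "q = x # q'" by (cases q) auto
    with n pq have "(n, p @ [c0] @ q') \<in> step Q"
      using stepI[of "[c0, x]" "[c0]" Q p q'] unfolding R0_def words_def by auto
    with irr_n show False unfolding irreducible_def by blast
  qed
  moreover have "p = []"
  proof (rule ccontr)
    assume "p \<noteq> []"
    then obtain x p' where "p = p' @ [x]" by (cases p rule: rev_cases) auto
    with n pq \<open>q = []\<close> have "(n, p' @ [c0] @ []) \<in> step Q"
      using stepI[of "[x, c0]" "[c0]" Q p' "[]"] unfolding R0_def words_def by auto
    with irr_n show False unfolding irreducible_def by blast
  qed
  ultimately show ?thesis using pq unfolding zero_nf_def by simp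
next
  case False
  then have nX: "n \<in> words X" using n unfolding words_def by blast
  have "irreducible R n" using irr_n step_mono[OF R_subset_Q] unfolding irreducible_def by blast
  then have nf_n: "normal_form R n = n"
    using normal_form_unique[OF rs comp nX rtrancl_refl] by simp
  have "(n, z) \<notin> cong_rel X R"
  proof
    assume "(n, z) \<in> cong_rel X R"
    then have "normal_form R n = normal_form R z" by (rule cong_rel_normal_form_eq[OF rs comp])
    moreover have "normal_form R z = z"
      using normal_form_unique[OF rs comp z_words rtrancl_refl irr] by simp
    ultimately have "n = z" using nf_n by simp
    with irr_n z_step show False unfolding irreducible_def by blast
  qed
  with False nf_n show ?thesis unfolding zero_nf_def by simp
qed

lemma confluent_Q: "confluent Y Q"
  using confluent_by_invariant[OF rewriting_system_Q noetherian_Q zero_nf_step zero_nf_irreducible] .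

lemma complete_Q: "complete Y Q"
  unfolding complete_def using noetherian_Q confluent_Q by blast

subsubsection \<open>The congruence\<close>

definition zero_subst :: "'a list \<Rightarrow> 'a list" where
  "zero_subst w = concat (map (\<lambda>x. if x = c0 then z else [x]) w)"

lemma zero_subst_append [simp]: "zero_subst (a @ b) = zero_subst a @ zero_subst b"
  unfolding zero_subst_def by simp

lemma zero_subst_set: "set w \<subseteq> Y \<Longrightarrow> set (zero_subst w) \<subseteq> X"
  using z_words unfolding zero_subst_def words_def by (induction w) auto

lemma zero_subst_words: "w \<in> words Y \<Longrightarrow> zero_subst w \<in> words X"
  using zero_subst_set z_words unfolding zero_subst_def words_def by (cases w) auto

lemma zero_subst_id: "c0 \<notin> set w \<Longrightarrow> zero_subst w = w"
  unfolding zero_subst_def by (induction w) auto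

lemma zero_subst_rule: "(u, v) \<in> Q \<Longrightarrow> (zero_subst u, zero_subst v) \<in> cong_rel X R"
proof -
  assume "(u, v) \<in> Q"
  then consider "(u, v) \<in> R" | "u = z" "v = [c0]"
    | x where "x \<in> Y" "u = [c0, x] \<or> u = [x, c0]" "v = [c0]"
    using Q_cases by blast
  then show ?thesis
  proof cases
    case 1
    then have "c0 \<notin> set u" "c0 \<notin> set v" using R_words c0 unfolding words_def by auto
    with 1 show ?thesis
      using step_cong_rel stepI[OF 1, of "[]" "[]"] R_words zero_subst_id by fastforce
  next
    case 2
    then show ?thesis using zero_subst_id[OF c0_notin_z] cong_rel_refl[OF z_words]
      by (simp add: zero_subst_def)
  next
    case (3 x)
    then have "set (zero_subst [x]) \<subseteq> X" using zero_subst_set[of "[x]"] by simp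
    with 3 show ?thesis
      using zero_absorbs[of "[]" "zero_subst [x]"] zero_absorbs[of "zero_subst [x]" "[]"]
      by (auto simp: zero_subst_def)
  qed
qed

lemma zero_subst_step:
  assumes "w \<in> words Y" "(w, w') \<in> step Q"
  shows "(zero_subst w, zero_subst w') \<in> cong_rel X R"
proof -
  obtain w1 u v w2 where "w = w1 @ u @ w2" "w' = w1 @ v @ w2" "(u, v) \<in> Q"
    using assms(2) unfolding step_iff by blast
  with assms(1) show ?thesis
    using cong_rel_append_context[OF zero_subst_rule zero_subst_set zero_subst_set]
    unfolding words_def by auto
qed

lemma zero_subst_cong_rel:
  assumes "(u, v) \<in> cong_rel Y Q"
  shows "(zero_subst u, zero_subst v) \<in> cong_rel X R"
proof -
  let ?E = "(step Q \<union> (step Q)\<inverse>) \<inter> (words Y \<times> words Y)"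
  have "(u, v) \<in> ?E\<^sup>*" "u \<in> words Y" using assms unfolding cong_rel_def by auto
  then show ?thesis
  proof (induction rule: rtrancl_induct)
    case base
    then show ?case using cong_rel_refl zero_subst_words by blast
  next
    case (step b c)
    then have "(zero_subst b, zero_subst c) \<in> cong_rel X R"
      using zero_subst_step cong_rel_sym by blast
    with step.IH step.prems show ?case by (blast intro: cong_rel_trans)
  qed
qed

lemma cong_rel_Q_on_words_X:
  assumes "u \<in> words X" "v \<in> words X"
  shows "(u, v) \<in> cong_rel Y Q \<longleftrightarrow> (u, v) \<in> cong_rel X R"
proof
  assume "(u, v) \<in> cong_rel Y Q"
  then have "(zero_subst u, zero_subst v) \<in> cong_rel X R" by (rule zero_subst_cong_rel)
  moreover have "c0 \<notin> set u" "c0 \<notin> set v" using assms c0 unfolding words_def by auto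
  ultimately show "(u, v) \<in> cong_rel X R" by (simp add: zero_subst_id)
next
  show "(u, v) \<in> cong_rel X R \<Longrightarrow> (u, v) \<in> cong_rel Y Q"
    using cong_rel_mono[of X Y R Q] R_subset_Q by blast
qed

lemma steps_zero_subst: "set w \<subseteq> Y \<Longrightarrow> (zero_subst w, w) \<in> (step Q)\<^sup>*"
proof (induction w)
  case (Cons x w)
  have "(zero_subst [x], [x]) \<in> (step Q)\<^sup>*"
    using z_step by (auto simp: zero_subst_def)
  from steps_append_context[OF this, of "[]" "zero_subst w"]
  have "(zero_subst [x] @ zero_subst w, [x] @ zero_subst w) \<in> (step Q)\<^sup>*" by simp
  moreover have "([x] @ zero_subst w, [x] @ w) \<in> (step Q)\<^sup>*"
    using steps_append_context[OF Cons.IH, of "[x]" "[]"] Cons.prems by simp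
  moreover have "zero_subst (x # w) = zero_subst [x] @ zero_subst w"
    by (simp add: zero_subst_def)
  ultimately show ?case by simp
qed (simp add: zero_subst_def)

lemma cong_rel_Q_words_X:
  assumes "w \<in> words Y"
  shows "\<exists>u \<in> words X. (w, u) \<in> cong_rel Y Q"
proof
  have "zero_subst w \<in> words Y" using zero_subst_words[OF assms] words_mono[of X Y] by blast
  moreover have "set w \<subseteq> Y" using assms unfolding words_def by blast
  ultimately show "(w, zero_subst w) \<in> cong_rel Y Q"
    using steps_cong_rel[OF rewriting_system_Q steps_zero_subst] cong_rel_sym by blast
qed (rule zero_subst_words[OF assms])

lemma irreducible_c0: "irreducible Q [c0]"
  unfolding irreducible_def
proof
  assume "\<exists>w'. ([c0], w') \<in> step Q"
  then obtain w1 u v w2 where ww: "[c0] = w1 @ u @ w2" and uv: "(u, v) \<in> Q"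
    unfolding step_iff by blast
  moreover have "u \<noteq> []" using rewriting_system_Q uv unfolding rewriting_system_def words_def by blast
  ultimately have "u = [c0]" by (cases w1; cases u) auto
  with uv show False using Q_cases R_words c0 c0_notin_z unfolding words_def by fastforce
qed

lemma c0_absorbs_left: "set w \<subseteq> Y \<Longrightarrow> ([c0] @ w, [c0]) \<in> (step Q)\<^sup>*"
proof (induction w)
  case (Cons x w)
  then have "([] @ [c0, x] @ w, [] @ [c0] @ w) \<in> step Q"
    by (intro stepI) (auto simp: R0_def)
  with Cons show ?case by (simp add: converse_rtrancl_into_rtrancl)
qed simp

lemma c0_absorbs_right: "set w \<subseteq> Y \<Longrightarrow> (w @ [c0], [c0]) \<in> (step Q)\<^sup>*"
proof (induction w rule: rev_induct)
  case (snoc x w)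
  then have "(w @ [x, c0] @ [], w @ [c0] @ []) \<in> step Q"
    by (intro stepI) (auto simp: R0_def)
  with snoc show ?case by (simp add: converse_rtrancl_into_rtrancl)
qed simp

lemma represents_zero_c0: "represents_zero Y Q [c0]"
  unfolding represents_zero_def
proof (intro conjI ballI)
  show "[c0] \<in> words Y" unfolding words_def by simp
  fix w assume w: "w \<in> words Y"
  then have "set w \<subseteq> Y" "w @ [c0] \<in> words Y" "[c0] @ w \<in> words Y" unfolding words_def by auto
  then show "(w @ [c0], [c0]) \<in> cong_rel Y Q" "([c0] @ w, [c0]) \<in> cong_rel Y Q"
    using steps_cong_rel[OF rewriting_system_Q c0_absorbs_right]
      steps_cong_rel[OF rewriting_system_Q c0_absorbs_left] by simp_all
qed

lemma c0_cong_z: "([c0], z) \<in> cong_rel Y Q"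
proof (rule cong_rel_sym, rule step_cong_rel[OF z_step])
  show "z \<in> words Y" using z_words words_mono[of X Y] by blast
qed (simp add: words_def)

end

theorem proposition2p1:
  fixes X :: "'a set" and R :: "('a list \<times> 'a list) set" and z :: "'a list" and c0 :: 'a
  assumes "rewriting_system X R" and "finite_rs X R" and "complete X R"
    and "c0 \<notin> X"
    and "represents_zero X R z" and "irreducible R z"
  shows "rewriting_system (X \<union> {c0}) (R0 X R z c0)
    \<and> finite_rs (X \<union> {c0}) (R0 X R z c0)
    \<and> complete (X \<union> {c0}) (R0 X R z c0)
    \<and> (\<forall>u \<in> words X. \<forall>v \<in> words X.
          (u, v) \<in> cong_rel (X \<union> {c0}) (R0 X R z c0) \<longleftrightarrow> (u, v) \<in> cong_rel X R)
    \<and> (\<forall>w \<in> words (X \<union> {c0}). \<exists>u \<in> words X. (w, u) \<in> cong_rel (X \<union> {c0}) (R0 X R z c0))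
    \<and> irreducible (R0 X R z c0) [c0]
    \<and> represents_zero (X \<union> {c0}) (R0 X R z c0) [c0]
    \<and> ([c0], z) \<in> cong_rel (X \<union> {c0}) (R0 X R z c0)"
proof -
  interpret zero_adjunction X R z c0
    using assms by unfold_locales
  show ?thesis
    by (intro conjI ballI rewriting_system_Q finite_rs_Q complete_Q cong_rel_Q_on_words_X
        cong_rel_Q_words_X irreducible_c0 represents_zero_c0 c0_cong_z)
qed

end
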